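(* Consider the random walk on $\mathbb{Z}$ starting at $2$ whose steps are independent and equal to $+3$ or $-2$, each with probability $\tfrac12$, stopped at the first time it enters $\{0,1\}$. Let $P_1(t)$ be the probability that the walk enters $\{0,1\}$ for the first time at step $t$ and does so at the site $1$. Then $$\sum_{t\ge 1}P_1(t)\,z^{2\beta(t)}=\sum_{n\ge 0}\frac{z^{6n+4}}{2^{5n+3}(2n+1)}\binom{5n+2}{2n},$$ where $\beta(t)$ denotes the number of $-2$ steps among the $t$ steps. Equivalently, absorption at $1$ can only happen after $2n+1$ steps $+3$ and $3n+2$ steps $-2$ (total $5n+3$ steps) for some $n\ge 0$, and the probability of this is $\dfrac{1}{2^{5n+3}(2n+1)}\binom{5n+2}{2n}$.
   Context: In this generating function $z^2$ marks each backward ($-2$) step. Arriving at $1$ at step $t$ with $f$ forward and $\beta$ backward steps forces $3f-2\beta=-1$. *)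

theory Defs
  imports "HOL-Probability.Probability" "HOL-Computational_Algebra.Formal_Power_Series"
begin

text \<open>Step sequences of length t: each step is +3 or -2. Under the walk's law
  every such sequence has probability 2^(-t), i.e. the uniform distribution.\<close>
definition step_seqs :: "nat \<Rightarrow> int list set" where
  "step_seqs t = {xs. length xs = t \<and> set xs \<subseteq> {3, -2}}"

definition walk_law :: "nat \<Rightarrow> int list pmf" where
  "walk_law t = pmf_of_set (step_seqs t)"

definition pos :: "int list \<Rightarrow> nat \<Rightarrow> int" where
  "pos xs i = 2 + sum_list (take i xs)"

definition absorbed_at_1 :: "nat \<Rightarrow> int list set" where
  "absorbed_at_1 t = {xs \<in> step_seqs t. (\<forall>i<t. pos xs i \<notin> {0, 1}) \<and> pos xs t = 1}"

definition P1 :: "nat \<Rightarrow> real" where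
  "P1 t = measure_pmf.prob (walk_law t) (absorbed_at_1 t)"

definition backsteps :: "int list \<Rightarrow> nat" where
  "backsteps xs = length (filter (\<lambda>s. s = -2) xs)"

definition absorption_gf :: "real fps" where
  "absorption_gf = Abs_fps (\<lambda>m. if even m then
      (\<Sum>t. measure_pmf.prob (walk_law t) {xs \<in> absorbed_at_1 t. backsteps xs = m div 2})
    else 0)"

definition closed_form_gf :: "real fps" where
  "closed_form_gf = Abs_fps (\<lambda>m. if m mod 6 = 4 then
      (let n = m div 6 in real ((5*n+2) choose (2*n)) / (2 ^ (5*n+3) * real (2*n+1)))
    else 0)"

end

theory Submission
  imports Defs
begin

text \<open>Steps of \<open>+3\<close> and \<open>-2\<close> started from \<open>2\<close> cannot jump over \<open>{0, 1}\<close> downwards, so a step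
  sequence first enters \<open>{0, 1}\<close> at site \<open>1\<close> after exactly \<open>t\<close> steps iff all its proper prefix sums
  are nonnegative and its total sum is \<open>-1\<close>. The total \<open>-1\<close> forces \<open>2n + 1\<close> forward and \<open>3n + 2\<close>
  backward steps, so \<open>t = 5n + 3\<close>. By the cycle lemma exactly one of the \<open>t\<close> rotations of a
  sequence with sum \<open>-1\<close> has nonnegative proper prefix sums; hence the absorbed sequences are a
  \<open>1/t\<close> fraction of the \<open>C(5n+3, 2n+1)\<close> sequences with sum \<open>-1\<close>, i.e. \<open>C(5n+2, 2n) / (2n+1)\<close>
  of them. In the generating function only \<open>t = 5n + 3\<close> contributes to \<open>z^(6n+4)\<close>.\<close>

lemma sum_list_rotate: "sum_list (rotate k xs) = sum_list (xs :: 'a::comm_monoid_add list)"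
  by (metis append_take_drop_id rotate_drop_take sum_list_append add.commute)

lemma sum_take_rotate_low:
  fixes xs :: "'a::ab_group_add list"
  assumes "k < length xs" "k + j \<le> length xs"
  shows "sum_list (take j (rotate k xs)) = sum_list (take (k + j) xs) - sum_list (take k xs)"
  using assms by (simp add: rotate_drop_take take_add)

lemma sum_take_rotate_high:
  fixes xs :: "'a::ab_group_add list"
  assumes "k < length xs" "j \<le> length xs" "length xs \<le> k + j"
  shows "sum_list (take j (rotate k xs)) =
    sum_list xs + sum_list (take (k + j - length xs) xs) - sum_list (take k xs)"
proof -
  have "take j (rotate k xs) = drop k xs @ take (k + j - length xs) xs"
    using assms by (simp add: rotate_drop_take add.commute)
  moreover have "sum_list (drop k xs) = sum_list xs - sum_list (take k xs)"
    by (metis append_take_drop_id sum_list_append add_diff_cancel_left')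
  ultimately show ?thesis by simp
qed

definition nonneg_prefix_sums :: "'a::{monoid_add, ord} list \<Rightarrow> bool" where
  "nonneg_prefix_sums xs \<longleftrightarrow> (\<forall>j<length xs. 0 \<le> sum_list (take j xs))"

lemma nonneg_prefix_sums_rotate_unique:
  fixes xs :: "int list"
  assumes "sum_list xs = -1" "k1 < k2" "k2 < length xs"
    and "nonneg_prefix_sums (rotate k1 xs)" "nonneg_prefix_sums (rotate k2 xs)"
  shows False
proof -
  let ?P = "\<lambda>i. sum_list (take i xs)"
  have "0 \<le> sum_list (take (k2 - k1) (rotate k1 xs))"
    using assms(2-4) by (simp add: nonneg_prefix_sums_def)
  then have "?P k1 \<le> ?P k2"
    using assms(2,3) sum_take_rotate_low[of k1 xs "k2 - k1"] by simp
  moreover have "0 \<le> sum_list (take (length xs - k2 + k1) (rotate k2 xs))"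
    using assms(2,3,5) by (simp add: nonneg_prefix_sums_def)
  then have "?P k2 < ?P k1"
    using assms(1-3) sum_take_rotate_high[of k2 xs "length xs - k2 + k1"] by simp
  ultimately show False by simp
qed

lemma nonneg_prefix_sums_rotate_exists:
  fixes xs :: "int list"
  assumes "sum_list xs = -1"
  obtains k where "k < length xs" "nonneg_prefix_sums (rotate k xs)"
proof -
  let ?P = "\<lambda>i. sum_list (take i xs)"
  let ?t = "length xs"
  have "xs \<noteq> []" using assms by auto
  then have "\<exists>i<?t. \<forall>i'<?t. ?P i \<le> ?P i'"
    using Min_in[of "?P ` {..<?t}"] Min_le[of "?P ` {..<?t}"] by fastforce
  \<comment> \<open>Rotate at the first minimum of the prefix sums. Being integers, the earlier prefix sums
    exceed the minimum by at least \<open>1\<close>, which pays for the total \<open>-1\<close> when wrapping around.\<close>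
  define k where "k = (LEAST i. i < ?t \<and> (\<forall>i'<?t. ?P i \<le> ?P i'))"
  have k: "k < ?t" "\<And>i. i < ?t \<Longrightarrow> ?P k \<le> ?P i"
    using LeastI_ex[OF \<open>\<exists>i<?t. _\<close>] unfolding k_def by blast+
  have before_k: "?P k < ?P i" if "i < k" for i
    using not_less_Least[OF that[unfolded k_def]] k that by force
  have "nonneg_prefix_sums (rotate k xs)"
    unfolding nonneg_prefix_sums_def
  proof (intro allI impI)
    fix j assume "j < length (rotate k xs)"
    then have j: "j < ?t" by simp
    show "0 \<le> sum_list (take j (rotate k xs))"
    proof (cases "k + j < ?t")
      case True
      then show ?thesis using k sum_take_rotate_low[of k xs j] by simp
    next
      case False
      then have "?P k < ?P (k + j - ?t)" using j by (intro before_k) simp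
      then show ?thesis using False j k assms sum_take_rotate_high[of k xs j] by simp
    qed
  qed
  then show ?thesis using k that by blast
qed

lemma cycle_lemma:
  fixes xs :: "int list"
  assumes "sum_list xs = -1"
  shows "card {k. k < length xs \<and> nonneg_prefix_sums (rotate k xs)} = 1"
proof -
  obtain k where k: "k < length xs" "nonneg_prefix_sums (rotate k xs)"
    using nonneg_prefix_sums_rotate_exists[OF assms] .
  have "{k. k < length xs \<and> nonneg_prefix_sums (rotate k xs)} = {k}"
    using k nonneg_prefix_sums_rotate_unique[OF assms] by (auto intro: linorder_cases[of k])
  then show ?thesis by simp
qed

lemma card_nonneg_prefix_sums_rotation_closed:
  fixes A :: "int list set"
  assumes "finite A"
    and "\<And>xs. xs \<in> A \<Longrightarrow> length xs = t \<and> sum_list xs = -1"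
    and "\<And>xs k. xs \<in> A \<Longrightarrow> rotate k xs \<in> A"
  shows "t * card {xs \<in> A. nonneg_prefix_sums xs} = card A"
proof -
  let ?G = "{xs \<in> A. nonneg_prefix_sums xs}"
  \<comment> \<open>Double counting of the pairs \<open>(xs, k)\<close> such that \<open>rotate k xs\<close> has nonnegative prefix sums.\<close>
  have fiber: "card {xs \<in> A. nonneg_prefix_sums (rotate k xs)} = card ?G" if "k < t" for k
  proof (rule bij_betw_same_card)
    show "bij_betw (rotate k) {xs \<in> A. nonneg_prefix_sums (rotate k xs)} ?G"
      by (rule bij_betw_byWitness[where f' = "rotate (t - k)"])
        (use assms(2,3) that in \<open>auto simp: rotate_rotate\<close>)
  qed
  have "card {k \<in> {..<t}. nonneg_prefix_sums (rotate k xs)} = 1" if "xs \<in> A" for xs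
    using cycle_lemma[of xs] assms(2)[OF that] by simp
  then have "card A = (\<Sum>xs\<in>A. card {k \<in> {..<t}. nonneg_prefix_sums (rotate k xs)})"
    by simp
  also have "\<dots> = (\<Sum>k<t. card {xs \<in> A. nonneg_prefix_sums (rotate k xs)})"
    using sum.swap_restrict[of A "{..<t}" "\<lambda>_ _. 1::nat"] assms(1) by simp
  also have "\<dots> = t * card ?G"
    using fiber by simp
  finally show ?thesis by simp
qed

lemma card_two_letter_lists_count:
  assumes "a \<noteq> b"
  shows "card {xs. length xs = t \<and> set xs \<subseteq> {a, b} \<and> length (filter (\<lambda>s. s = a) xs) = k}
    = t choose k"
proof -
  let ?L = "{xs. length xs = t \<and> set xs \<subseteq> {a, b} \<and> length (filter (\<lambda>s. s = a) xs) = k}"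
  define positions where "positions xs = {i. i < t \<and> xs ! i = a}" for xs
  define word where "word B = map (\<lambda>i. if i \<in> B then a else b) [0..<t]" for B
  have word_nth: "i < t \<Longrightarrow> word B ! i = (if i \<in> B then a else b)" for i B
    by (simp add: word_def)
  have if_eq_a: "(if i \<in> B then a else b) = a \<longleftrightarrow> i \<in> B" "a = (if i \<in> B then a else b) \<longleftrightarrow> i \<in> B"
    for i :: nat and B
    using assms by simp_all
  have "bij_betw positions ?L {B. B \<subseteq> {..<t} \<and> card B = k}"
  proof (rule bij_betw_byWitness[where f' = word])
    show "\<forall>xs\<in>?L. word (positions xs) = xs"
    proof
      fix xs assume xs: "xs \<in> ?L"
      have "xs ! i \<in> {a, b}" if "i < t" for i
        using xs that nth_mem by blast
      then show "word (positions xs) = xs"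
        using xs by (intro nth_equalityI) (auto simp: word_def positions_def)
    qed
    show "\<forall>B\<in>{B. B \<subseteq> {..<t} \<and> card B = k}. positions (word B) = B"
      by (auto simp: positions_def word_nth if_eq_a)
    show "positions ` ?L \<subseteq> {B. B \<subseteq> {..<t} \<and> card B = k}"
      by (auto simp: positions_def length_filter_conv_card)
    have "word B \<in> ?L" if B: "B \<subseteq> {..<t}" "card B = k" for B
    proof -
      have "{i. i < t \<and> word B ! i = a} = B"
        using B by (auto simp: word_nth if_eq_a)
      moreover have "length (word B) = t" "set (word B) \<subseteq> {a, b}"
        by (auto simp: word_def)
      ultimately show ?thesis
        using B by (simp add: length_filter_conv_card)
    qed
    then show "word ` {B. B \<subseteq> {..<t} \<and> card B = k} \<subseteq> ?L"
      by blast
  qed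
  then show ?thesis
    using bij_betw_same_card n_subsets[of "{..<t}" k] by fastforce
qed

abbreviation forward_steps :: "int list \<Rightarrow> nat" where
  "forward_steps xs \<equiv> length (filter (\<lambda>s. s = 3) xs)"

lemma finite_step_seqs: "finite (step_seqs t)"
  using finite_lists_length_eq[of "{3, -2 :: int}" t] by (simp add: step_seqs_def conj_commute)

lemma card_step_seqs: "card (step_seqs t) = 2 ^ t"
  using card_lists_length_eq[of "{3, -2 :: int}" t] by (simp add: step_seqs_def conj_commute numeral_2_eq_2)

lemma card_step_seqs_forward_steps:
  "card {xs \<in> step_seqs t. forward_steps xs = k} = t choose k"
  using card_two_letter_lists_count[of "3::int" "-2" t k] by (simp add: step_seqs_def conj_assoc)

lemma step_seq_step_counts:
  assumes "xs \<in> step_seqs t"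
  shows "sum_list xs = 3 * int (forward_steps xs) - 2 * int (backsteps xs)"
    and "t = forward_steps xs + backsteps xs"
proof -
  have "set xs \<subseteq> {3, -2}" "length xs = t"
    using assms by (auto simp: step_seqs_def)
  then show "sum_list xs = 3 * int (forward_steps xs) - 2 * int (backsteps xs)"
    and "t = forward_steps xs + backsteps xs"
    by (induction xs arbitrary: t) (auto simp: backsteps_def)
qed

lemma step_seq_sum_eq_minus_one_iff:
  assumes "xs \<in> step_seqs t"
  shows "sum_list xs = -1 \<longleftrightarrow> (\<exists>n. forward_steps xs = 2 * n + 1 \<and> backsteps xs = 3 * n + 2)"
proof
  assume "sum_list xs = -1"
  then have eq: "3 * forward_steps xs + 1 = 2 * backsteps xs"
    using step_seq_step_counts(1)[OF assms] by linarith
  then obtain n where "forward_steps xs = 2 * n + 1"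
    by (metis dvd_triv_left even_add even_mult_iff odd_numeral odd_one oddE)
  with eq show "\<exists>n. forward_steps xs = 2 * n + 1 \<and> backsteps xs = 3 * n + 2"
    by auto
qed (use step_seq_step_counts(1)[OF assms] in auto)

lemma walk_avoids_0_1_iff_nonneg_prefix_sums:
  assumes "set xs \<subseteq> {3, -2}"
  shows "(\<forall>i<length xs. pos xs i \<notin> {0, 1}) \<longleftrightarrow> nonneg_prefix_sums xs"
proof
  assume avoid: "\<forall>i<length xs. pos xs i \<notin> {0, 1}"
  \<comment> \<open>From a position \<open>\<ge> 2\<close> a step lands at a position \<open>\<ge> 0\<close>, hence at one \<open>\<ge> 2\<close> if it avoids \<open>{0, 1}\<close>.\<close>
  have "i < length xs \<Longrightarrow> 0 \<le> sum_list (take i xs)" for i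
  proof (induction i)
    case (Suc i)
    then have i: "i < length xs" by simp
    then have "xs ! i \<in> {3, -2}"
      using assms nth_mem by blast
    moreover have "take (Suc i) xs = take i xs @ [xs ! i]"
      using i by (simp add: take_Suc_conv_app_nth)
    ultimately show ?case
      using Suc.IH Suc.prems avoid[rule_format, of "Suc i"] by (auto simp: pos_def)
  qed simp
  then show "nonneg_prefix_sums xs"
    by (simp add: nonneg_prefix_sums_def)
qed (auto simp: nonneg_prefix_sums_def pos_def)

lemma absorbed_at_1_iff:
  "absorbed_at_1 t = {xs \<in> step_seqs t. nonneg_prefix_sums xs \<and> sum_list xs = -1}"
  using walk_avoids_0_1_iff_nonneg_prefix_sums
  by (auto simp: absorbed_at_1_def step_seqs_def pos_def)

lemma absorbed_at_1_step_counts: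
  assumes "xs \<in> absorbed_at_1 t"
  obtains n where "t = 5 * n + 3" "forward_steps xs = 2 * n + 1" "backsteps xs = 3 * n + 2"
proof -
  have xs: "xs \<in> step_seqs t" "sum_list xs = -1"
    using assms by (auto simp: absorbed_at_1_iff)
  then obtain n where "forward_steps xs = 2 * n + 1" "backsteps xs = 3 * n + 2"
    using step_seq_sum_eq_minus_one_iff by blast
  moreover have "t = 5 * n + 3"
    using calculation step_seq_step_counts(2)[OF xs(1)] by simp
  ultimately show ?thesis using that by blast
qed

lemma card_absorbed_at_1:
  "(2 * n + 1) * card (absorbed_at_1 (5 * n + 3)) = (5 * n + 2) choose (2 * n)"
proof -
  let ?t = "5 * n + 3"
  let ?A = "{xs \<in> step_seqs ?t. sum_list xs = -1}"
  have absorbed: "absorbed_at_1 ?t = {xs \<in> ?A. nonneg_prefix_sums xs}"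
    by (auto simp: absorbed_at_1_iff)
  have rotations: "?t * card {xs \<in> ?A. nonneg_prefix_sums xs} = card ?A"
  proof (rule card_nonneg_prefix_sums_rotation_closed)
    show "finite ?A"
      using finite_step_seqs by simp
  qed (auto simp: step_seqs_def sum_list_rotate)
  have "?A = {xs \<in> step_seqs ?t. forward_steps xs = 2 * n + 1}"
    using step_seq_sum_eq_minus_one_iff step_seq_step_counts(2) by fastforce
  then have card_A: "card ?A = ?t choose (2 * n + 1)"
    by (simp add: card_step_seqs_forward_steps)
  have "?t * ((2 * n + 1) * card (absorbed_at_1 ?t)) = (2 * n + 1) * card ?A"
    unfolding absorbed rotations[symmetric] by (rule mult.left_commute)
  also have "\<dots> = ?t * ((5 * n + 2) choose (2 * n))"
    using Suc_times_binomial[of "2 * n" "5 * n + 2"] unfolding card_A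
    by (metis Suc_eq_plus1 add_Suc_right numeral_3_eq_3 numeral_2_eq_2)
  finally show ?thesis
    by simp
qed

lemma P1_eq_card: "P1 t = card (absorbed_at_1 t) / 2 ^ t"
proof -
  have "step_seqs t \<noteq> {}"
    using card_step_seqs[of t] by (metis card.empty power_not_zero zero_neq_numeral)
  moreover have "step_seqs t \<inter> absorbed_at_1 t = absorbed_at_1 t"
    by (auto simp: absorbed_at_1_def)
  ultimately show ?thesis
    by (simp add: P1_def walk_law_def measure_pmf_of_set finite_step_seqs card_step_seqs)
qed

lemma P1_absorption_time:
  "P1 (5 * n + 3) = real ((5 * n + 2) choose (2 * n)) / (2 ^ (5 * n + 3) * real (2 * n + 1))"
proof -
  have "real (2 * n + 1) * real (card (absorbed_at_1 (5 * n + 3))) = real ((5 * n + 2) choose (2 * n))"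
    using card_absorbed_at_1[of n] by (metis of_nat_mult)
  then have "real (card (absorbed_at_1 (5 * n + 3))) = real ((5 * n + 2) choose (2 * n)) / real (2 * n + 1)"
    by (simp add: eq_divide_eq mult.commute del: of_nat_add of_nat_mult)
  then show ?thesis
    by (simp add: P1_eq_card)
qed

lemma P1_eq:
  "P1 t = (if t mod 5 = 3 then
     (let n = t div 5 in real ((5*n+2) choose (2*n)) / (2 ^ (5*n+3) * real (2*n+1)))
   else 0)"
proof (cases "t mod 5 = 3")
  case True
  then have "t = 5 * (t div 5) + 3"
    using div_mult_mod_eq[of t 5] by linarith
  then show ?thesis
    using True P1_absorption_time[of "t div 5"] by (simp add: Let_def)
next
  case False
  then have "absorbed_at_1 t = {}"
    by (auto elim!: absorbed_at_1_step_counts)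
  then show ?thesis
    using False by (simp add: P1_eq_card)
qed

lemma prob_absorbed_at_1_backsteps:
  "measure_pmf.prob (walk_law t) {xs \<in> absorbed_at_1 t. backsteps xs = b} =
    (if \<exists>n. t = 5 * n + 3 \<and> b = 3 * n + 2 then P1 t else 0)"
proof (cases "\<exists>n. t = 5 * n + 3 \<and> b = 3 * n + 2")
  case True
  then have "{xs \<in> absorbed_at_1 t. backsteps xs = b} = absorbed_at_1 t"
    by (auto elim: absorbed_at_1_step_counts)
  then show ?thesis
    using True by (simp add: P1_def)
next
  case False
  then have none: "{xs \<in> absorbed_at_1 t. backsteps xs = b} = {}"
    by (auto elim: absorbed_at_1_step_counts)
  show ?thesis
    unfolding none if_not_P[OF False] by simp
qed

lemma absorption_gf_eq_closed_form_gf: "absorption_gf = closed_form_gf"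
proof (rule fps_ext)
  fix m
  show "fps_nth absorption_gf m = fps_nth closed_form_gf m"
  proof (cases "\<exists>n. m = 6 * n + 4")
    case True
    then obtain n where m: "m = 6 * n + 4" by blast
    have "(\<lambda>t. measure_pmf.prob (walk_law t) {xs \<in> absorbed_at_1 t. backsteps xs = m div 2})
        = (\<lambda>t. if t = 5 * n + 3 then P1 t else 0)"
      using m by (auto simp: prob_absorbed_at_1_backsteps)
    then have "fps_nth absorption_gf m = P1 (5 * n + 3)"
      using m sums_single[of "5 * n + 3" P1] by (simp add: absorption_gf_def sums_iff)
    then show ?thesis
      using m by (simp add: closed_form_gf_def P1_absorption_time)
  next
    case False
    have "m mod 6 \<noteq> 4"
    proof
      assume "m mod 6 = 4"
      then have "m = 6 * (m div 6) + 4"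
        using div_mult_mod_eq[of m 6] by linarith
      with False show False
        by blast
    qed
    moreover have "\<not> (\<exists>n. t = 5 * n + 3 \<and> m div 2 = 3 * n + 2)" if "even m" for t
    proof
      assume "\<exists>n. t = 5 * n + 3 \<and> m div 2 = 3 * n + 2"
      then obtain n where "m div 2 = 3 * n + 2" by blast
      moreover have "2 * (m div 2) = m"
        using \<open>even m\<close> by simp
      ultimately have "m = 6 * n + 4"
        by linarith
      with False show False
        by blast
    qed
    ultimately show ?thesis
      by (simp add: absorption_gf_def closed_form_gf_def prob_absorbed_at_1_backsteps)
  qed
qed

theorem mainTheorem4:
  shows "absorption_gf = closed_form_gf
    \<and> (\<forall>t. P1 t = (if t mod 5 = 3 then
          (let n = t div 5 in real ((5*n+2) choose (2*n)) / (2 ^ (5*n+3) * real (2*n+1)))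
        else 0))
    \<and> (\<forall>t xs. xs \<in> absorbed_at_1 t \<longrightarrow>
          t mod 5 = 3 \<and> backsteps xs = 3 * (t div 5) + 2
          \<and> length (filter (\<lambda>s. s = 3) xs) = 2 * (t div 5) + 1)"
proof -
  have "t mod 5 = 3 \<and> backsteps xs = 3 * (t div 5) + 2 \<and> forward_steps xs = 2 * (t div 5) + 1"
    if absorbed: "xs \<in> absorbed_at_1 t" for t xs
  proof -
    obtain n where "t = 5 * n + 3" "forward_steps xs = 2 * n + 1" "backsteps xs = 3 * n + 2"
      using absorbed_at_1_step_counts[OF absorbed] .
    then show ?thesis
      by simp
  qed
  then show ?thesis
    using absorption_gf_eq_closed_form_gf P1_eq by blast
qed

end
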